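(* For every $m\ge 0$, the sum of $\varsigma(\mathcal M_\bullet)$ over all rooted maps $\mathcal M_\bullet$ with $m$ edges (one from each isomorphism class of rooted maps) equals $\frac{(2m)!}{m!}$, where $\varsigma(\mathcal M_\bullet)$ is the number of quasi-trees of $\mathcal M_\bullet$.
   Context: A map is a triple $\mathcal M=(B,\sigma,\alpha)$ with $B$ finite, $\sigma,\alpha\in\mathrm{Sym}(B)$, $\alpha$ a fixed-point-free involution, $\langle\sigma,\alpha\rangle$ transitive on $B$. Edges are the cycles of $\alpha$; $\underline b=\{b,\alpha(b)\}$. A rooted map is a map together with a distinguished flag $b_\bullet\in B$; two rooted maps are isomorphic if there is a bijection between their flag sets conjugating the respective $\sigma$'s and $\alpha$'s and mapping root to root. The tour of a set $F$ of edges is $\tau$ with $\tau(b)=\sigma(\alpha(b))$ if $\underline b\in F$ and $\tau(b)=\sigma(b)$ otherwise; a quasi-tree is a set of edges whose tour is a single cycle on $B$. *)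

theory Defs
  imports Complex_Main "HOL-Combinatorics.Permutations"
begin

definition is_map :: "'a set \<Rightarrow> ('a \<Rightarrow> 'a) \<Rightarrow> ('a \<Rightarrow> 'a) \<Rightarrow> bool" where
  "is_map B \<sigma> \<alpha> \<longleftrightarrow> finite B \<and> \<sigma> permutes B \<and> \<alpha> permutes B \<and>
     (\<forall>b\<in>B. \<alpha> (\<alpha> b) = b \<and> \<alpha> b \<noteq> b) \<and>
     (\<forall>x\<in>B. \<forall>y\<in>B. (x, y) \<in> ({(b, \<sigma> b) | b. b \<in> B} \<union> {(b, inv \<sigma> b) | b. b \<in> B}
                                   \<union> {(b, \<alpha> b) | b. b \<in> B})\<^sup>*)"

text \<open>Rooted map: a map with a distinguished flag in B. Convention: the map with no flags
(zero edges, the vertex map) counts as a rooted map, with a dummy root.\<close>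

definition is_rooted_map :: "'a set \<Rightarrow> ('a \<Rightarrow> 'a) \<Rightarrow> ('a \<Rightarrow> 'a) \<Rightarrow> 'a \<Rightarrow> bool" where
  "is_rooted_map B \<sigma> \<alpha> r \<longleftrightarrow> is_map B \<sigma> \<alpha> \<and> (r \<in> B \<or> B = {})"

definition rooted_map_iso ::
  "'a set \<Rightarrow> ('a \<Rightarrow> 'a) \<Rightarrow> ('a \<Rightarrow> 'a) \<Rightarrow> 'a \<Rightarrow> 'b set \<Rightarrow> ('b \<Rightarrow> 'b) \<Rightarrow> ('b \<Rightarrow> 'b) \<Rightarrow> 'b \<Rightarrow> bool" where
  "rooted_map_iso B \<sigma> \<alpha> r B' \<sigma>' \<alpha>' r' \<longleftrightarrow>
     (\<exists>\<phi>. bij_betw \<phi> B B' \<and> (\<forall>b\<in>B. \<phi> (\<sigma> b) = \<sigma>' (\<phi> b) \<and> \<phi> (\<alpha> b) = \<alpha>' (\<phi> b)) \<and>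
          (B \<noteq> {} \<longrightarrow> \<phi> r = r'))"

definition map_edges :: "'a set \<Rightarrow> ('a \<Rightarrow> 'a) \<Rightarrow> 'a set set" where
  "map_edges B \<alpha> = {{b, \<alpha> b} | b. b \<in> B}"

definition tour :: "('a \<Rightarrow> 'a) \<Rightarrow> ('a \<Rightarrow> 'a) \<Rightarrow> 'a set set \<Rightarrow> 'a \<Rightarrow> 'a" where
  "tour \<sigma> \<alpha> F b = (if {b, \<alpha> b} \<in> F then \<sigma> (\<alpha> b) else \<sigma> b)"

definition single_cycle_on :: "'a set \<Rightarrow> ('a \<Rightarrow> 'a) \<Rightarrow> bool" where
  "single_cycle_on B \<tau> \<longleftrightarrow> (\<forall>x\<in>B. \<forall>y\<in>B. \<exists>n. (\<tau> ^^ n) x = y)"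

definition quasi_trees :: "'a set \<Rightarrow> ('a \<Rightarrow> 'a) \<Rightarrow> ('a \<Rightarrow> 'a) \<Rightarrow> 'a set set set" where
  "quasi_trees B \<sigma> \<alpha> = {F. F \<subseteq> map_edges B \<alpha> \<and> single_cycle_on B (tour \<sigma> \<alpha> F)}"

text \<open>Every rooted map with m edges has 2m flags and is isomorphic to one on the flag set
{0..<2m}; the isomorphism classes of rooted maps with m edges are thus the classes of the
following set under rooted-map isomorphism.\<close>

definition rooted_maps_std :: "nat \<Rightarrow> ((nat \<Rightarrow> nat) \<times> (nat \<Rightarrow> nat) \<times> nat) set" where
  "rooted_maps_std m = {(\<sigma>, \<alpha>, r). is_rooted_map {0..<2*m} \<sigma> \<alpha> r}"

definition rooted_map_iso_rel :: "nat \<Rightarrow> (((nat \<Rightarrow> nat) \<times> (nat \<Rightarrow> nat) \<times> nat) \<times> ((nat \<Rightarrow> nat) \<times> (nat \<Rightarrow> nat) \<times> nat)) set" where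
  "rooted_map_iso_rel m = {((\<sigma>, \<alpha>, r), (\<sigma>', \<alpha>', r')).
      (\<sigma>, \<alpha>, r) \<in> rooted_maps_std m \<and> (\<sigma>', \<alpha>', r') \<in> rooted_maps_std m \<and>
      rooted_map_iso {0..<2*m} \<sigma> \<alpha> r {0..<2*m} \<sigma>' \<alpha>' r'}"

definition varsigma :: "nat \<Rightarrow> (nat \<Rightarrow> nat) \<times> (nat \<Rightarrow> nat) \<times> nat \<Rightarrow> nat" where
  "varsigma m M = (case M of (\<sigma>, \<alpha>, r) \<Rightarrow> card (quasi_trees {0..<2*m} \<sigma> \<alpha>))"

end

theory Submission
  imports Defs "HOL-Combinatorics.Orbits" "HOL-Library.Disjoint_Sets"
begin

(*
  Relabelling the flags by permutations of {0..<2m} acts on rooted maps; its orbits are the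
  isomorphism classes, and the action is free, because an automorphism of a rooted map fixes
  the root and hence, by connectivity, every flag. So each class has (2m)! members, and as the
  number of quasi-trees is invariant, (2m)! times the sum over the classes counts the pairs
  (M, F) of a rooted map M on {0..<2m} and a quasi-tree F of M.  Such a pair is encoded by the
  tour tau = sigma o alpha_F rooted at the root, together with alpha and F, where alpha_F swaps
  the two flags of each edge in F: sigma = tau o alpha_F is recovered, and connectivity is
  automatic since tau is a single cycle.  There are (2m)! rooted cyclic permutations and
  (2m)!/(2^m m!) * 2^m pairs (alpha, F), so the sum is (2m)!/m!.
*)

section \<open>Fixed-point-free involutions\<close>

definition fpf_involutions :: "'a set \<Rightarrow> ('a \<Rightarrow> 'a) set" where
  "fpf_involutions B = {\<alpha>. \<alpha> permutes B \<and> (\<forall>b\<in>B. \<alpha> (\<alpha> b) = b \<and> \<alpha> b \<noteq> b)}"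

lemma finite_fpf_involutions: "finite B \<Longrightarrow> finite (fpf_involutions B)"
  by (rule finite_subset[OF _ finite_permutations[of B]]) (auto simp: fpf_involutions_def)

lemma fpf_involution_involutive:
  assumes "\<alpha> \<in> fpf_involutions B"
  shows "\<alpha> (\<alpha> b) = b"
  using assms permutes_not_in[of \<alpha> B] by (cases "b \<in> B") (auto simp: fpf_involutions_def)

lemma fpf_involutions_mapping_to:
  assumes "a \<in> B" "b \<in> B" "a \<noteq> b"
  shows "{\<alpha> \<in> fpf_involutions B. \<alpha> a = b} =
         (\<lambda>\<beta>. Transposition.transpose a b \<circ> \<beta>) ` fpf_involutions (B - {a, b})"
proof (intro equalityI subsetI)
  fix \<alpha> assume "\<alpha> \<in> {\<alpha> \<in> fpf_involutions B. \<alpha> a = b}"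
  then have \<alpha>: "\<alpha> \<in> fpf_involutions B" and ab: "\<alpha> a = b" by auto
  have ba: "\<alpha> b = a" using fpf_involution_involutive[OF \<alpha>, of a] ab by simp
  have inv: "\<alpha> (\<alpha> x) = x" for x by (rule fpf_involution_involutive[OF \<alpha>])
  define \<beta> where "\<beta> = Transposition.transpose a b \<circ> \<alpha>"
  have off_ab: "\<alpha> x \<notin> {a, b}" if "x \<notin> {a, b}" for x
    using that inv[of x] ab ba by auto
  have \<beta>_off_ab: "\<beta> x = \<alpha> x" if "x \<notin> {a, b}" for x
    using off_ab[OF that] by (simp add: \<beta>_def)
  have "\<beta> permutes B"
    unfolding \<beta>_def using \<alpha> assms by (intro permutes_compose permutes_swap_id) (auto simp: fpf_involutions_def)
  then have "\<beta> permutes B - {a, b}"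
    by (rule permutes_superset) (auto simp: \<beta>_def ab ba)
  moreover have "\<beta> (\<beta> x) = x \<and> \<beta> x \<noteq> x" if "x \<in> B - {a, b}" for x
    using that \<alpha> off_ab[of x] by (auto simp: \<beta>_off_ab inv fpf_involutions_def)
  ultimately have "\<beta> \<in> fpf_involutions (B - {a, b})" by (simp add: fpf_involutions_def)
  moreover have "\<alpha> = Transposition.transpose a b \<circ> \<beta>" by (simp add: \<beta>_def fun_eq_iff)
  ultimately show "\<alpha> \<in> (\<lambda>\<beta>. Transposition.transpose a b \<circ> \<beta>) ` fpf_involutions (B - {a, b})" by blast
next
  fix \<alpha> assume "\<alpha> \<in> (\<lambda>\<beta>. Transposition.transpose a b \<circ> \<beta>) ` fpf_involutions (B - {a, b})"
  then obtain \<beta> where \<beta>: "\<beta> \<in> fpf_involutions (B - {a, b})" and \<alpha>_eq: "\<alpha> = Transposition.transpose a b \<circ> \<beta>"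
    by auto
  have \<beta>_perm: "\<beta> permutes B - {a, b}" using \<beta> by (simp add: fpf_involutions_def)
  have \<beta>_ab: "\<beta> a = a" "\<beta> b = b" using \<beta>_perm by (auto simp: permutes_not_in)
  have "\<alpha> permutes B"
    unfolding \<alpha>_eq using assms permutes_subset[OF \<beta>_perm]
    by (intro permutes_compose permutes_swap_id) auto
  moreover have "\<alpha> (\<alpha> x) = x \<and> \<alpha> x \<noteq> x" if "x \<in> B" for x
  proof (cases "x \<in> {a, b}")
    case True
    then show ?thesis using \<beta>_ab assms by (auto simp: \<alpha>_eq)
  next
    case False
    then have "\<beta> x \<in> B - {a, b}" using permutes_in_image[OF \<beta>_perm] that by auto
    then show ?thesis using \<beta> that False by (auto simp: \<alpha>_eq fpf_involutions_def)
  qed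
  moreover have "\<alpha> a = b" by (simp add: \<alpha>_eq \<beta>_ab)
  ultimately show "\<alpha> \<in> {\<alpha> \<in> fpf_involutions B. \<alpha> a = b}" by (simp add: fpf_involutions_def)
qed

lemma card_fpf_involutions_mapping_to:
  assumes "a \<in> B" "b \<in> B" "a \<noteq> b"
  shows "card {\<alpha> \<in> fpf_involutions B. \<alpha> a = b} = card (fpf_involutions (B - {a, b}))"
proof -
  have "inj_on (\<lambda>\<beta>. Transposition.transpose a b \<circ> \<beta>) X" for X
    by (rule inj_onI) (metis comp_apply transpose_eq_imp_eq ext)
  then show ?thesis
    unfolding fpf_involutions_mapping_to[OF assms] by (rule card_image)
qed

lemma card_fpf_involutions:
  assumes "finite B" "card B = 2 * k"
  shows "2 ^ k * fact k * card (fpf_involutions B) = fact (2 * k)"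
  using assms
proof (induction k arbitrary: B)
  case 0
  then have "fpf_involutions B = {id}" by (auto simp: fpf_involutions_def)
  then show ?case by simp
next
  case (Suc k)
  then obtain a where a: "a \<in> B" by fastforce
  have "fpf_involutions B = (\<Union>b\<in>B - {a}. {\<alpha> \<in> fpf_involutions B. \<alpha> a = b})"
    using a by (auto simp: fpf_involutions_def permutes_in_image)
  then have "card (fpf_involutions B) = card (\<Union>b\<in>B - {a}. {\<alpha> \<in> fpf_involutions B. \<alpha> a = b})"
    by (rule arg_cong)
  also have "\<dots> = (\<Sum>b\<in>B - {a}. card {\<alpha> \<in> fpf_involutions B. \<alpha> a = b})"
    using Suc.prems by (intro card_UN_disjoint) (auto simp: finite_fpf_involutions)
  also have "\<dots> = (\<Sum>b\<in>B - {a}. card (fpf_involutions (B - {a, b})))"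
    using a by (intro sum.cong refl card_fpf_involutions_mapping_to) auto
  finally have "2 ^ k * fact k * card (fpf_involutions B)
      = (\<Sum>b\<in>B - {a}. 2 ^ k * fact k * card (fpf_involutions (B - {a, b})))"
    by (simp add: sum_distrib_left)
  also have "\<dots> = (\<Sum>b\<in>B - {a}. fact (2 * k))"
    using Suc a by (intro sum.cong refl Suc.IH) (auto simp: card_Diff_subset)
  also have "\<dots> = (2 * k + 1) * fact (2 * k)"
    using Suc.prems a by simp
  finally have IH_sum: "2 ^ k * fact k * card (fpf_involutions B) = (2 * k + 1) * fact (2 * k)" .
  have "2 ^ Suc k * fact (Suc k) * card (fpf_involutions B)
      = 2 * Suc k * (2 ^ k * fact k * card (fpf_involutions B))"
    by (simp add: algebra_simps)
  also have "\<dots> = fact (2 * Suc k)"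
    unfolding IH_sum by (simp add: algebra_simps)
  finally show ?case .
qed

lemma card_map_edges:
  assumes "finite B" "\<alpha> \<in> fpf_involutions B"
  shows "2 * card (map_edges B \<alpha>) = card B"
proof -
  have inv: "\<alpha> (\<alpha> b) = b \<and> \<alpha> b \<noteq> b" if "b \<in> B" for b
    using assms that by (auto simp: fpf_involutions_def)
  have "\<Union>(map_edges B \<alpha>) = B"
    using assms permutes_in_image[of \<alpha> B] by (auto simp: map_edges_def fpf_involutions_def)
  moreover have "2 * card (map_edges B \<alpha>) = card (\<Union>(map_edges B \<alpha>))"
  proof (rule card_partition)
    show "finite (map_edges B \<alpha>)" "finite (\<Union>(map_edges B \<alpha>))"
      using assms(1) \<open>\<Union>(map_edges B \<alpha>) = B\<close> by (simp_all add: map_edges_def)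
    show "card e = 2" if "e \<in> map_edges B \<alpha>" for e
      using that inv by (fastforce simp: map_edges_def card_insert_if)
    show "e \<inter> e' = {}" if "e \<in> map_edges B \<alpha>" "e' \<in> map_edges B \<alpha>" "e \<noteq> e'" for e e'
      using that inv by (auto simp: map_edges_def) metis+
  qed
  ultimately show ?thesis by simp
qed

lemma card_fpf_involutions_with_edge_sets:
  assumes "finite B" "card B = 2 * k"
  shows "card (SIGMA \<alpha>:fpf_involutions B. Pow (map_edges B \<alpha>)) * fact k = fact (2 * k)"
proof -
  have "card (Pow (map_edges B \<alpha>)) = 2 ^ k" if "\<alpha> \<in> fpf_involutions B" for \<alpha>
    using card_map_edges[OF assms(1) that] assms by (simp add: card_Pow map_edges_def)
  then have "card (SIGMA \<alpha>:fpf_involutions B. Pow (map_edges B \<alpha>)) = 2 ^ k * card (fpf_involutions B)"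
    using assms(1) by (simp add: card_SigmaI finite_fpf_involutions map_edges_def)
  then show ?thesis using card_fpf_involutions[OF assms] by (simp add: algebra_simps)
qed

section \<open>Rooted cyclic permutations\<close>

definition rotation :: "nat \<Rightarrow> nat \<Rightarrow> nat" where
  "rotation n i = (if i < n then Suc i mod n else i)"

lemma funpow_rotation: "i < n \<Longrightarrow> (rotation n ^^ k) i = (i + k) mod n"
  by (induction k) (simp_all add: rotation_def mod_Suc_eq)

lemma rotation_permutes: "rotation n permutes {0..<n}"
proof (rule bij_imp_permutes)
  have inj: "inj_on (rotation n) {0..<n}"
    by (rule inj_onI) (auto simp: rotation_def mod_Suc split: if_splits)
  moreover have "rotation n ` {0..<n} \<subseteq> {0..<n}" by (auto simp: rotation_def)
  ultimately show "bij_betw (rotation n) {0..<n} {0..<n}"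
    by (simp add: bij_betw_def endo_inj_surj)
qed (simp add: rotation_def)

lemma single_cycle_on_rotation: "single_cycle_on {0..<n} (rotation n)"
  unfolding single_cycle_on_def
proof (intro ballI)
  fix x y assume "x \<in> {0..<n}" "y \<in> {0..<n}"
  then have "(rotation n ^^ (y + n - x)) x = y" by (simp add: funpow_rotation)
  then show "\<exists>k. (rotation n ^^ k) x = y" ..
qed

lemma funpow_conj:
  assumes "\<phi> permutes B"
  shows "(\<phi> \<circ> \<tau> \<circ> inv \<phi>) ^^ k = \<phi> \<circ> (\<tau> ^^ k) \<circ> inv \<phi>"
  by (induction k) (simp_all add: fun_eq_iff permutes_inverses[OF assms])

lemma single_cycle_on_conj:
  assumes "\<phi> permutes B" "single_cycle_on B \<tau>"
  shows "single_cycle_on B (\<phi> \<circ> \<tau> \<circ> inv \<phi>)"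
  unfolding single_cycle_on_def
proof (intro ballI)
  fix x y assume "x \<in> B" "y \<in> B"
  then have "inv \<phi> x \<in> B" "inv \<phi> y \<in> B"
    using permutes_in_image[OF permutes_inv[OF assms(1)]] by auto
  then obtain k where "(\<tau> ^^ k) (inv \<phi> x) = inv \<phi> y"
    using assms(2) unfolding single_cycle_on_def by blast
  then have "((\<phi> \<circ> \<tau> \<circ> inv \<phi>) ^^ k) x = y"
    by (simp add: funpow_conj[OF assms(1)] permutes_inverses[OF assms(1)])
  then show "\<exists>k. ((\<phi> \<circ> \<tau> \<circ> inv \<phi>) ^^ k) x = y" ..
qed

lemma single_cycle_on_enumeration:
  assumes "finite B" "\<tau> permutes B" "single_cycle_on B \<tau>" "r \<in> B"
  shows "bij_betw (\<lambda>i. (\<tau> ^^ i) r) {0..<card B} B" "(\<tau> ^^ card B) r = r"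
proof -
  have perm: "permutation \<tau>" using assms(1,2) by (auto simp: permutation_permutes)
  have r_in: "r \<in> orbit \<tau> r" by (rule permutation_self_in_orbit[OF perm])
  have "orbit \<tau> r = B"
  proof
    show "orbit \<tau> r \<subseteq> B" by (rule permutes_orbit_subset[OF assms(2,4)])
    show "B \<subseteq> orbit \<tau> r"
      using assms(3,4) unfolding single_cycle_on_def orbit_altdef_permutation[OF perm] by fastforce
  qed
  then have bij: "bij_betw (\<lambda>i. (\<tau> ^^ i) r) {0..<funpow_dist1 \<tau> r r} B"
    using inj_on_funpow_dist1[OF r_in] orbit_conv_funpow_dist1[OF r_in] by (simp add: bij_betw_def)
  then have "card B = funpow_dist1 \<tau> r r" using bij_betw_same_card by fastforce
  then show "bij_betw (\<lambda>i. (\<tau> ^^ i) r) {0..<card B} B" "(\<tau> ^^ card B) r = r"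
    using bij funpow_dist1_prop[OF r_in] by simp_all
qed

definition rooted_cycles :: "nat \<Rightarrow> ((nat \<Rightarrow> nat) \<times> nat) set" where
  "rooted_cycles n = {(\<tau>, r). \<tau> permutes {0..<n} \<and> single_cycle_on {0..<n} \<tau> \<and> r < n}"

text \<open>A cyclic permutation \<open>\<tau>\<close> rooted at \<open>r\<close> is \<open>\<pi> \<circ> rotation n \<circ> inv \<pi>\<close> with \<open>\<pi> 0 = r\<close> for exactly
  one permutation \<open>\<pi>\<close>, namely \<open>\<pi> i = (\<tau> ^^ i) r\<close>; so there are \<open>n!\<close> of them.\<close>

lemma rooted_cycle_conj_rotation:
  assumes "\<tau> permutes {0..<n}" "single_cycle_on {0..<n} \<tau>" "r < n"
  obtains \<pi> where "\<pi> permutes {0..<n}" "\<pi> \<circ> rotation n \<circ> inv \<pi> = \<tau>" "\<pi> 0 = r"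
proof -
  have enum: "bij_betw (\<lambda>i. (\<tau> ^^ i) r) {0..<n} {0..<n}" and period: "(\<tau> ^^ n) r = r"
    using single_cycle_on_enumeration[OF _ assms(1,2), of r] assms(3) by simp_all
  define \<pi> where "\<pi> i = (if i < n then (\<tau> ^^ i) r else i)" for i
  have "bij_betw \<pi> {0..<n} {0..<n}"
    using enum by (rule bij_betw_cong[THEN iffD1, rotated]) (simp add: \<pi>_def)
  then have \<pi>: "\<pi> permutes {0..<n}"
    by (rule bij_imp_permutes) (simp add: \<pi>_def)
  have "\<pi> (rotation n i) = \<tau> (\<pi> i)" for i
  proof -
    consider "Suc i < n" | "Suc i = n" | "n \<le> i" by linarith
    then show ?thesis
    proof cases
      case 1
      then show ?thesis by (simp add: \<pi>_def rotation_def)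
    next
      case 2
      then have "\<tau> (\<pi> i) = (\<tau> ^^ n) r" using 2[symmetric] by (simp add: \<pi>_def)
      then show ?thesis using 2 period assms(3) by (simp add: \<pi>_def rotation_def)
    next
      case 3
      then show ?thesis using permutes_not_in[OF assms(1)] by (simp add: \<pi>_def rotation_def)
    qed
  qed
  then have "\<pi> \<circ> rotation n \<circ> inv \<pi> = \<tau> \<circ> \<pi> \<circ> inv \<pi>" by (simp add: fun_eq_iff)
  then have "\<pi> \<circ> rotation n \<circ> inv \<pi> = \<tau>"
    by (simp add: o_assoc[symmetric] permutes_inv_o(1)[OF \<pi>])
  moreover have "\<pi> 0 = r" using assms(3) by (simp add: \<pi>_def)
  ultimately show ?thesis using \<pi> that by blast
qed

lemma card_rooted_cycles:
  assumes "0 < n"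
  shows "card (rooted_cycles n) = fact n"
proof -
  define P where "P \<pi> = (\<pi> \<circ> rotation n \<circ> inv \<pi>, \<pi> 0)" for \<pi> :: "nat \<Rightarrow> nat"
  have recover: "\<pi> i = ((fst (P \<pi>)) ^^ i) (snd (P \<pi>))" if "\<pi> permutes {0..<n}" "i < n" for \<pi> i
    using that by (simp add: P_def funpow_conj permutes_inverses funpow_rotation)
  have "inj_on P {\<pi>. \<pi> permutes {0..<n}}"
  proof (rule inj_onI, rule ext)
    fix \<pi>1 \<pi>2 i assume \<pi>: "\<pi>1 \<in> {\<pi>. \<pi> permutes {0..<n}}" "\<pi>2 \<in> {\<pi>. \<pi> permutes {0..<n}}"
      and "P \<pi>1 = P \<pi>2"
    then show "\<pi>1 i = \<pi>2 i"
      using recover[of \<pi>1 i] recover[of \<pi>2 i] permutes_not_in[of \<pi>1 "{0..<n}" i]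
        permutes_not_in[of \<pi>2 "{0..<n}" i]
      by (cases "i < n") auto
  qed
  moreover have "P ` {\<pi>. \<pi> permutes {0..<n}} = rooted_cycles n"
  proof (intro equalityI subsetI)
    fix x assume "x \<in> P ` {\<pi>. \<pi> permutes {0..<n}}"
    then obtain \<pi> where \<pi>: "\<pi> permutes {0..<n}" and "x = P \<pi>" by blast
    moreover have "\<pi> \<circ> rotation n \<circ> inv \<pi> permutes {0..<n}"
      by (intro permutes_compose permutes_inv \<pi> rotation_permutes)
    moreover have "\<pi> 0 < n" using permutes_in_image[OF \<pi>, of 0] assms by simp
    ultimately show "x \<in> rooted_cycles n"
      by (simp add: P_def rooted_cycles_def single_cycle_on_conj[OF \<pi> single_cycle_on_rotation])
  next
    fix x assume "x \<in> rooted_cycles n"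
    then obtain \<tau> r where "x = (\<tau>, r)" "\<tau> permutes {0..<n}" "single_cycle_on {0..<n} \<tau>" "r < n"
      by (auto simp: rooted_cycles_def)
    then show "x \<in> P ` {\<pi>. \<pi> permutes {0..<n}}"
      by (metis (mono_tags) P_def rooted_cycle_conj_rotation image_eqI mem_Collect_eq)
  qed
  ultimately show ?thesis
    using card_image card_permutations[of "{0..<n}" n] by fastforce
qed

section \<open>Tours\<close>

definition edge_flip :: "('a \<Rightarrow> 'a) \<Rightarrow> 'a set set \<Rightarrow> 'a \<Rightarrow> 'a" where
  "edge_flip \<alpha> F b = (if {b, \<alpha> b} \<in> F then \<alpha> b else b)"

lemma tour_eq_comp_edge_flip: "tour \<sigma> \<alpha> F = \<sigma> \<circ> edge_flip \<alpha> F"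
  by (simp add: fun_eq_iff tour_def edge_flip_def)

lemma edge_flip_involutive:
  assumes "\<And>b. \<alpha> (\<alpha> b) = b"
  shows "edge_flip \<alpha> F (edge_flip \<alpha> F b) = b"
  using assms by (auto simp: edge_flip_def insert_commute)

lemma tour_edge_flip_inverse:
  assumes "\<And>b. \<alpha> (\<alpha> b) = b"
  shows "tour \<sigma> \<alpha> F \<circ> edge_flip \<alpha> F = \<sigma>" "tour (\<tau> \<circ> edge_flip \<alpha> F) \<alpha> F = \<tau>"
  by (simp_all add: tour_eq_comp_edge_flip fun_eq_iff edge_flip_involutive[OF assms])

lemma edge_flip_permutes:
  assumes "\<alpha> \<in> fpf_involutions B"
  shows "edge_flip \<alpha> F permutes B"
  unfolding permutes_def
proof (intro conjI allI impI)
  fix x assume "x \<notin> B"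
  then show "edge_flip \<alpha> F x = x"
    using assms permutes_not_in[of \<alpha> B x] by (simp add: edge_flip_def fpf_involutions_def)
next
  fix y show "\<exists>!x. edge_flip \<alpha> F x = y"
    using edge_flip_involutive[OF fpf_involution_involutive[OF assms]] by metis
qed

definition map_rel :: "'a set \<Rightarrow> ('a \<Rightarrow> 'a) \<Rightarrow> ('a \<Rightarrow> 'a) \<Rightarrow> ('a \<times> 'a) set" where
  "map_rel B \<sigma> \<alpha> = {(b, \<sigma> b) | b. b \<in> B} \<union> {(b, inv \<sigma> b) | b. b \<in> B} \<union> {(b, \<alpha> b) | b. b \<in> B}"

lemma is_map_iff:
  "is_map B \<sigma> \<alpha> \<longleftrightarrow> finite B \<and> \<sigma> permutes B \<and> \<alpha> \<in> fpf_involutions B \<and>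
     (\<forall>x\<in>B. \<forall>y\<in>B. (x, y) \<in> (map_rel B \<sigma> \<alpha>)\<^sup>*)"
  by (auto simp: is_map_def fpf_involutions_def map_rel_def)

text \<open>Connectivity comes for free: each step of the tour is at most one step along \<open>\<alpha>\<close>
  followed by one step along \<open>\<sigma>\<close>.\<close>

lemma is_map_comp_edge_flip:
  assumes "finite B" "\<tau> permutes B" "single_cycle_on B \<tau>" "\<alpha> \<in> fpf_involutions B"
  shows "is_map B (\<tau> \<circ> edge_flip \<alpha> F) \<alpha>"
proof -
  let ?flip = "edge_flip \<alpha> F" and ?\<sigma> = "\<tau> \<circ> edge_flip \<alpha> F"
  let ?R = "map_rel B ?\<sigma> \<alpha>"
  have flip_perm: "?flip permutes B" by (rule edge_flip_permutes[OF assms(4)])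
  have tour_step: "(x, \<tau> x) \<in> ?R\<^sup>*" if "x \<in> B" for x
  proof -
    have "(x, ?flip x) \<in> ?R\<^sup>="
      using that by (auto simp: edge_flip_def map_rel_def)
    moreover have "(?flip x, ?\<sigma> (?flip x)) \<in> ?R"
      using that permutes_in_image[OF flip_perm] by (auto simp: map_rel_def)
    moreover have "?\<sigma> (?flip x) = \<tau> x"
      by (simp add: edge_flip_involutive[OF fpf_involution_involutive[OF assms(4)]])
    ultimately show ?thesis by (metis rtrancl_reflcl r_into_rtrancl rtrancl_into_rtrancl)
  qed
  have "(x, (\<tau> ^^ k) x) \<in> ?R\<^sup>*" if "x \<in> B" for x k
  proof (induction k)
    case (Suc k)
    have "(\<tau> ^^ k) x \<in> B" by (rule permutes_in_funpow_image[OF assms(2) that])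
    then have "((\<tau> ^^ k) x, \<tau> ((\<tau> ^^ k) x)) \<in> ?R\<^sup>*" by (rule tour_step)
    with Suc.IH have "(x, \<tau> ((\<tau> ^^ k) x)) \<in> ?R\<^sup>*" by (rule rtrancl_trans)
    then show ?case by (simp add: comp_def)
  qed simp
  then have "\<forall>x\<in>B. \<forall>y\<in>B. (x, y) \<in> ?R\<^sup>*"
    using assms(3) unfolding single_cycle_on_def by metis
  moreover have "?\<sigma> permutes B" by (rule permutes_compose[OF flip_perm assms(2)])
  ultimately show ?thesis using assms(1,4) by (simp add: is_map_iff)
qed

section \<open>Relabelling rooted maps\<close>

definition relabel ::
  "('a \<Rightarrow> 'a) \<Rightarrow> ('a \<Rightarrow> 'a) \<times> ('a \<Rightarrow> 'a) \<times> 'a \<Rightarrow> ('a \<Rightarrow> 'a) \<times> ('a \<Rightarrow> 'a) \<times> 'a" where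
  "relabel \<phi> M = (case M of (\<sigma>, \<alpha>, r) \<Rightarrow> (\<phi> \<circ> \<sigma> \<circ> inv \<phi>, \<phi> \<circ> \<alpha> \<circ> inv \<phi>, \<phi> r))"

lemma relabel_id: "relabel id M = M"
  by (cases M) (simp add: relabel_def)

lemma relabel_relabel:
  assumes "\<phi> permutes B" "\<psi> permutes B"
  shows "relabel \<psi> (relabel \<phi> M) = relabel (\<psi> \<circ> \<phi>) M"
  using assms by (cases M) (simp add: relabel_def o_inv_distrib permutes_bij o_assoc)

lemma relabel_inv:
  assumes "\<phi> permutes B"
  shows "relabel (inv \<phi>) (relabel \<phi> M) = M"
  using assms by (cases M) (simp add: relabel_def fun_eq_iff permutes_inverses permutes_inv_inv)

lemma conj_eq_if_intertwines:
  assumes "\<phi> permutes B" "f permutes B" "g permutes B" "\<forall>b\<in>B. \<phi> (f b) = g (\<phi> b)"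
  shows "g = \<phi> \<circ> f \<circ> inv \<phi>"
proof
  fix x show "g x = (\<phi> \<circ> f \<circ> inv \<phi>) x"
  proof (cases "x \<in> B")
    case True
    then have "inv \<phi> x \<in> B" using permutes_in_image[OF permutes_inv[OF assms(1)]] by simp
    then show ?thesis using assms(4) permutes_inverses[OF assms(1)] by (metis comp_apply)
  next
    case False
    then show ?thesis
      using permutes_not_in[OF assms(1)] permutes_not_in[OF assms(2)] permutes_not_in[OF assms(3)]
        permutes_not_in[OF permutes_inv[OF assms(1)]]
      by simp
  qed
qed

lemma fpf_involutions_conj:
  assumes "\<phi> permutes B" "\<alpha> \<in> fpf_involutions B"
  shows "\<phi> \<circ> \<alpha> \<circ> inv \<phi> \<in> fpf_involutions B"
proof -
  have "(\<phi> \<circ> \<alpha> \<circ> inv \<phi>) b \<noteq> b" if "b \<in> B" for b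
  proof
    assume "(\<phi> \<circ> \<alpha> \<circ> inv \<phi>) b = b"
    then have "\<alpha> (inv \<phi> b) = inv \<phi> b" by (metis assms(1) comp_apply permutes_inverses(2))
    moreover have "inv \<phi> b \<in> B" using that permutes_in_image[OF permutes_inv[OF assms(1)]] by simp
    ultimately show False using assms(2) by (auto simp: fpf_involutions_def)
  qed
  moreover have "\<phi> \<circ> \<alpha> \<circ> inv \<phi> permutes B"
    using assms by (intro permutes_compose permutes_inv) (auto simp: fpf_involutions_def)
  ultimately show ?thesis
    using fpf_involution_involutive[OF assms(2)]
    by (simp add: fpf_involutions_def permutes_inverses[OF assms(1)])
qed

lemma is_map_conj:
  assumes "is_map B \<sigma> \<alpha>" "\<phi> permutes B"
  shows "is_map B (\<phi> \<circ> \<sigma> \<circ> inv \<phi>) (\<phi> \<circ> \<alpha> \<circ> inv \<phi>)"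
proof -
  let ?\<sigma> = "\<phi> \<circ> \<sigma> \<circ> inv \<phi>" and ?\<alpha> = "\<phi> \<circ> \<alpha> \<circ> inv \<phi>"
  have \<sigma>: "\<sigma> permutes B" and \<alpha>: "\<alpha> \<in> fpf_involutions B"
    and conn: "\<forall>x\<in>B. \<forall>y\<in>B. (x, y) \<in> (map_rel B \<sigma> \<alpha>)\<^sup>*"
    using assms(1) by (auto simp: is_map_iff)
  have \<sigma>': "?\<sigma> permutes B" by (intro permutes_compose permutes_inv assms(2) \<sigma>)
  have "(\<phi> x, \<phi> y) \<in> map_rel B ?\<sigma> ?\<alpha>" if "(x, y) \<in> map_rel B \<sigma> \<alpha>" for x y
  proof -
    have "inv ?\<sigma> (\<phi> x) = \<phi> (inv \<sigma> x)"
      by (simp add: permutes_inv_eq[OF \<sigma>'] permutes_inverses[OF assms(2)] permutes_inverses[OF \<sigma>])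
    moreover have "\<phi> x \<in> B" using that permutes_in_image[OF assms(2)] by (auto simp: map_rel_def)
    ultimately show ?thesis
      using that by (auto simp: map_rel_def permutes_inverses[OF assms(2)])
  qed
  note rel_step = this
  have "(\<phi> x, \<phi> y) \<in> (map_rel B ?\<sigma> ?\<alpha>)\<^sup>*" if "(x, y) \<in> (map_rel B \<sigma> \<alpha>)\<^sup>*" for x y
    using that by (induction rule: rtrancl_induct) (blast intro: rtrancl_into_rtrancl rel_step)+
  then have "\<forall>x\<in>B. \<forall>y\<in>B. (x, y) \<in> (map_rel B ?\<sigma> ?\<alpha>)\<^sup>*"
    using conn permutes_in_image[OF permutes_inv[OF assms(2)]] permutes_inverses[OF assms(2)]
    by metis
  then show ?thesis
    using assms \<sigma>' fpf_involutions_conj[OF assms(2) \<alpha>] by (simp add: is_map_iff)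
qed

lemma quasi_tree_conj:
  assumes "\<phi> permutes B" "F \<in> quasi_trees B \<sigma> \<alpha>"
  shows "image \<phi> ` F \<in> quasi_trees B (\<phi> \<circ> \<sigma> \<circ> inv \<phi>) (\<phi> \<circ> \<alpha> \<circ> inv \<phi>)"
proof -
  let ?\<sigma> = "\<phi> \<circ> \<sigma> \<circ> inv \<phi>" and ?\<alpha> = "\<phi> \<circ> \<alpha> \<circ> inv \<phi>"
  have F: "F \<subseteq> map_edges B \<alpha>" "single_cycle_on B (tour \<sigma> \<alpha> F)"
    using assms(2) by (auto simp: quasi_trees_def)
  have edge_image: "\<phi> ` {b, \<alpha> b} = {\<phi> b, ?\<alpha> (\<phi> b)}" for b
    by (simp add: permutes_inverses[OF assms(1)])
  have "image \<phi> ` F \<subseteq> map_edges B ?\<alpha>"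
  proof
    fix e assume "e \<in> image \<phi> ` F"
    then obtain b where "b \<in> B" "e = \<phi> ` {b, \<alpha> b}" using F(1) by (auto simp: map_edges_def)
    then show "e \<in> map_edges B ?\<alpha>"
      using permutes_in_image[OF assms(1)] unfolding map_edges_def edge_image by blast
  qed
  moreover have "tour ?\<sigma> ?\<alpha> (image \<phi> ` F) = \<phi> \<circ> tour \<sigma> \<alpha> F \<circ> inv \<phi>"
  proof
    fix x
    obtain b where x: "x = \<phi> b" using permutes_surj[OF assms(1)] by (metis surjD)
    have "inj (image \<phi>)" using permutes_inj[OF assms(1)] by (simp add: inj_image_eq_iff inj_def)
    then have "({x, ?\<alpha> x} \<in> image \<phi> ` F) = ({b, \<alpha> b} \<in> F)"
      unfolding x edge_image[symmetric] by (rule inj_image_mem_iff)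
    then show "tour ?\<sigma> ?\<alpha> (image \<phi> ` F) x = (\<phi> \<circ> tour \<sigma> \<alpha> F \<circ> inv \<phi>) x"
      by (simp add: tour_def x permutes_inverses[OF assms(1)])
  qed
  ultimately show ?thesis
    using single_cycle_on_conj[OF assms(1) F(2)] by (simp add: quasi_trees_def)
qed

lemma card_quasi_trees_conj:
  assumes "\<phi> permutes B"
  shows "card (quasi_trees B (\<phi> \<circ> \<sigma> \<circ> inv \<phi>) (\<phi> \<circ> \<alpha> \<circ> inv \<phi>)) = card (quasi_trees B \<sigma> \<alpha>)"
proof -
  have conj_back: "inv \<phi> \<circ> (\<phi> \<circ> f \<circ> inv \<phi>) \<circ> inv (inv \<phi>) = f" for f
    using assms by (simp add: fun_eq_iff permutes_inv_inv permutes_inverses)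
  have image_back: "image \<phi> ` image (inv \<phi>) ` F = F" "image (inv \<phi>) ` image \<phi> ` F = F" for F
    using assms by (simp_all add: image_comp comp_def image_image permutes_inverses)
  have "bij_betw (image (image \<phi>)) (quasi_trees B \<sigma> \<alpha>) (quasi_trees B (\<phi> \<circ> \<sigma> \<circ> inv \<phi>) (\<phi> \<circ> \<alpha> \<circ> inv \<phi>))"
  proof (rule bij_betw_byWitness[where f' = "image (image (inv \<phi>))"])
    show "image (image \<phi>) ` quasi_trees B \<sigma> \<alpha> \<subseteq> quasi_trees B (\<phi> \<circ> \<sigma> \<circ> inv \<phi>) (\<phi> \<circ> \<alpha> \<circ> inv \<phi>)"
      using quasi_tree_conj[OF assms] by blast
    show "image (image (inv \<phi>)) ` quasi_trees B (\<phi> \<circ> \<sigma> \<circ> inv \<phi>) (\<phi> \<circ> \<alpha> \<circ> inv \<phi>) \<subseteq> quasi_trees B \<sigma> \<alpha>"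
      using quasi_tree_conj[OF permutes_inv[OF assms], of _ "\<phi> \<circ> \<sigma> \<circ> inv \<phi>" "\<phi> \<circ> \<alpha> \<circ> inv \<phi>"]
      unfolding conj_back by blast
    show "\<forall>F\<in>quasi_trees B \<sigma> \<alpha>. image (image (inv \<phi>)) (image (image \<phi>) F) = F"
      using image_back(2) by blast
    show "\<forall>F\<in>quasi_trees B (\<phi> \<circ> \<sigma> \<circ> inv \<phi>) (\<phi> \<circ> \<alpha> \<circ> inv \<phi>). image (image \<phi>) (image (image (inv \<phi>)) F) = F"
      using image_back(1) by blast
  qed
  then show ?thesis by (rule sym[OF bij_betw_same_card])
qed

lemma rooted_map_iso_iff_relabel:
  assumes "\<sigma> permutes B" "\<alpha> permutes B" "\<sigma>' permutes B" "\<alpha>' permutes B" "r \<in> B"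
  shows "rooted_map_iso B \<sigma> \<alpha> r B \<sigma>' \<alpha>' r' \<longleftrightarrow>
         (\<exists>\<phi>. \<phi> permutes B \<and> (\<sigma>', \<alpha>', r') = relabel \<phi> (\<sigma>, \<alpha>, r))"
proof
  assume "rooted_map_iso B \<sigma> \<alpha> r B \<sigma>' \<alpha>' r'"
  then obtain \<psi> where \<psi>: "bij_betw \<psi> B B" "\<forall>b\<in>B. \<psi> (\<sigma> b) = \<sigma>' (\<psi> b) \<and> \<psi> (\<alpha> b) = \<alpha>' (\<psi> b)" "\<psi> r = r'"
    using assms(5) unfolding rooted_map_iso_def by blast
  define \<phi> where "\<phi> x = (if x \<in> B then \<psi> x else x)" for x
  have "bij_betw \<phi> B B" using \<psi>(1) by (rule bij_betw_cong[THEN iffD1, rotated]) (simp add: \<phi>_def)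
  then have \<phi>: "\<phi> permutes B" by (rule bij_imp_permutes) (simp add: \<phi>_def)
  have "\<forall>b\<in>B. \<phi> (\<sigma> b) = \<sigma>' (\<phi> b)" "\<forall>b\<in>B. \<phi> (\<alpha> b) = \<alpha>' (\<phi> b)"
    using \<psi>(2) permutes_in_image[OF assms(1)] permutes_in_image[OF assms(2)] by (auto simp: \<phi>_def)
  then have "\<sigma>' = \<phi> \<circ> \<sigma> \<circ> inv \<phi>" "\<alpha>' = \<phi> \<circ> \<alpha> \<circ> inv \<phi>"
    using conj_eq_if_intertwines[OF \<phi>] assms(1-4) by auto
  moreover have "r' = \<phi> r" using \<psi>(3) assms(5) by (simp add: \<phi>_def)
  ultimately show "\<exists>\<phi>. \<phi> permutes B \<and> (\<sigma>', \<alpha>', r') = relabel \<phi> (\<sigma>, \<alpha>, r)"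
    using \<phi> by (auto simp: relabel_def)
next
  assume "\<exists>\<phi>. \<phi> permutes B \<and> (\<sigma>', \<alpha>', r') = relabel \<phi> (\<sigma>, \<alpha>, r)"
  then obtain \<phi> where "\<phi> permutes B" "\<sigma>' = \<phi> \<circ> \<sigma> \<circ> inv \<phi>" "\<alpha>' = \<phi> \<circ> \<alpha> \<circ> inv \<phi>" "r' = \<phi> r"
    by (auto simp: relabel_def)
  then show "rooted_map_iso B \<sigma> \<alpha> r B \<sigma>' \<alpha>' r'"
    unfolding rooted_map_iso_def by (intro exI[of _ \<phi>]) (simp add: permutes_imp_bij permutes_inverses)
qed

text \<open>Rooted maps have no nontrivial automorphisms: a relabelling that fixes the root and
  commutes with \<open>\<sigma>\<close> and \<open>\<alpha>\<close> fixes every flag reachable from the root.\<close>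

lemma inj_on_relabel:
  assumes "is_map B \<sigma> \<alpha>" "r \<in> B"
  shows "inj_on (\<lambda>\<phi>. relabel \<phi> (\<sigma>, \<alpha>, r)) {\<phi>. \<phi> permutes B}"
proof (rule inj_onI)
  fix \<phi>1 \<phi>2 assume "\<phi>1 \<in> {\<phi>. \<phi> permutes B}" "\<phi>2 \<in> {\<phi>. \<phi> permutes B}"
    and eq: "relabel \<phi>1 (\<sigma>, \<alpha>, r) = relabel \<phi>2 (\<sigma>, \<alpha>, r)"
  then have \<phi>: "\<phi>1 permutes B" "\<phi>2 permutes B" by simp_all
  let ?\<sigma>' = "\<phi>1 \<circ> \<sigma> \<circ> inv \<phi>1" and ?\<alpha>' = "\<phi>1 \<circ> \<alpha> \<circ> inv \<phi>1"
  have \<sigma>: "\<sigma> permutes B" and conn: "\<forall>y\<in>B. (r, y) \<in> (map_rel B \<sigma> \<alpha>)\<^sup>*"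
    using assms by (auto simp: is_map_iff)
  have conj_eq: "?\<sigma>' = \<phi>2 \<circ> \<sigma> \<circ> inv \<phi>2" "?\<alpha>' = \<phi>2 \<circ> \<alpha> \<circ> inv \<phi>2" "\<phi>1 r = \<phi>2 r"
    using eq by (simp_all add: relabel_def)
  have intertwines1: "\<phi>1 (\<sigma> b) = ?\<sigma>' (\<phi>1 b)" "\<phi>1 (\<alpha> b) = ?\<alpha>' (\<phi>1 b)" for b
    by (simp_all add: permutes_inverses[OF \<phi>(1)])
  have intertwines2: "\<phi>2 (\<sigma> b) = ?\<sigma>' (\<phi>2 b)" "\<phi>2 (\<alpha> b) = ?\<alpha>' (\<phi>2 b)" for b
    unfolding conj_eq by (simp_all add: permutes_inverses[OF \<phi>(2)])
  have inj: "inj ?\<sigma>'"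
    by (rule permutes_inj[OF permutes_compose[OF permutes_inv[OF \<phi>(1)] permutes_compose[OF \<sigma> \<phi>(1)]]])
  have "\<phi>1 y = \<phi>2 y" if "(r, y) \<in> (map_rel B \<sigma> \<alpha>)\<^sup>*" for y
    using that
  proof (induction rule: rtrancl_induct)
    case base
    then show ?case by (rule conj_eq(3))
  next
    case (step y z)
    then consider "z = \<sigma> y" | "\<sigma> z = y" | "z = \<alpha> y"
      using permutes_inverses(1)[OF \<sigma>] by (auto simp: map_rel_def)
    then show ?case
    proof cases
      case 2
      then have "?\<sigma>' (\<phi>1 z) = ?\<sigma>' (\<phi>2 z)" using step.IH intertwines1(1) intertwines2(1) by metis
      then show ?thesis by (rule injD[OF inj])
    qed (metis step.IH intertwines1 intertwines2)+
  qed
  then show "\<phi>1 = \<phi>2"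
    using conn assms(2) permutes_not_in[OF \<phi>(1)] permutes_not_in[OF \<phi>(2)] by (metis ext)
qed

lemma sum_quotient_representatives:
  fixes f :: "'a \<Rightarrow> 'b::comm_semiring_1"
  assumes "finite A" "equiv A R" "\<And>C. C \<in> A // R \<Longrightarrow> card C = c" "\<And>x y. (x, y) \<in> R \<Longrightarrow> f x = f y"
  shows "of_nat c * (\<Sum>C\<in>A // R. f (SOME x. x \<in> C)) = (\<Sum>x\<in>A. f x)"
proof -
  have "(\<Sum>x\<in>A. f x) = (\<Sum>C\<in>A // R. \<Sum>x\<in>C. f x)"
    by (rule sum.partition[OF assms(1) partition_on_quotient[OF assms(2)]])
  also have "\<dots> = (\<Sum>C\<in>A // R. of_nat c * f (SOME x. x \<in> C))"
  proof (rule sum.cong[OF refl])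
    fix C assume C: "C \<in> A // R"
    have "(SOME x. x \<in> C) \<in> C"
      using in_quotient_imp_non_empty[OF assms(2) C] by (simp add: some_in_eq)
    then have "f x = f (SOME x. x \<in> C)" if "x \<in> C" for x
      using assms(4) in_quotient_imp_in_rel[OF assms(2) C] that by blast
    then show "(\<Sum>x\<in>C. f x) = of_nat c * f (SOME x. x \<in> C)"
      using assms(3)[OF C] by simp
  qed
  finally show ?thesis by (simp add: sum_distrib_left)
qed

section \<open>Rooted maps on \<open>{0..<2m}\<close>\<close>

lemma rooted_maps_std_iff:
  assumes "0 < m"
  shows "(\<sigma>, \<alpha>, r) \<in> rooted_maps_std m \<longleftrightarrow> is_map {0..<2*m} \<sigma> \<alpha> \<and> r < 2 * m"
  using assms by (auto simp: rooted_maps_std_def is_rooted_map_def)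

lemma relabel_in_rooted_maps_std:
  assumes "0 < m" "M \<in> rooted_maps_std m" "\<phi> permutes {0..<2*m}"
  shows "relabel \<phi> M \<in> rooted_maps_std m"
  using assms is_map_conj[OF _ assms(3)] permutes_in_image[OF assms(3)]
  by (cases M) (simp add: relabel_def rooted_maps_std_iff)

lemma rooted_map_iso_rel_iff:
  assumes "0 < m"
  shows "(M, M') \<in> rooted_map_iso_rel m \<longleftrightarrow>
         M \<in> rooted_maps_std m \<and> (\<exists>\<phi>. \<phi> permutes {0..<2*m} \<and> M' = relabel \<phi> M)"
proof (cases "M \<in> rooted_maps_std m")
  case True
  obtain \<sigma> \<alpha> r \<sigma>' \<alpha>' r' where M: "M = (\<sigma>, \<alpha>, r)" and M': "M' = (\<sigma>', \<alpha>', r')"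
    by (cases M, cases M') auto
  have perms: "\<sigma> permutes {0..<2*m} \<and> \<alpha> permutes {0..<2*m}"
    if "(\<sigma>, \<alpha>, r) \<in> rooted_maps_std m" for \<sigma> \<alpha> r
    using that assms by (simp add: rooted_maps_std_iff is_map_def)
  have r: "r \<in> {0..<2*m}" using True assms by (simp add: M rooted_maps_std_iff)
  have "M' \<in> rooted_maps_std m" if "\<phi> permutes {0..<2*m}" "M' = relabel \<phi> M" for \<phi>
    using that relabel_in_rooted_maps_std[OF assms True] by simp
  then show ?thesis
    using True perms[of \<sigma> \<alpha> r] perms[of \<sigma>' \<alpha>' r'] rooted_map_iso_iff_relabel[OF _ _ _ _ r]
    unfolding rooted_map_iso_rel_def M M' by blast
qed (cases M, cases M', simp add: rooted_map_iso_rel_def)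

lemma equiv_rooted_map_iso_rel:
  assumes "0 < m"
  shows "equiv (rooted_maps_std m) (rooted_map_iso_rel m)"
proof (rule equivI)
  show "rooted_map_iso_rel m \<subseteq> rooted_maps_std m \<times> rooted_maps_std m"
    by (auto simp: rooted_map_iso_rel_def)
  show "refl_on (rooted_maps_std m) (rooted_map_iso_rel m)"
    by (rule refl_onI) (auto simp: rooted_map_iso_rel_iff[OF assms] relabel_id
        intro!: exI[of _ id] permutes_id)
  show "sym (rooted_map_iso_rel m)"
  proof (rule symI)
    fix x y assume "(x, y) \<in> rooted_map_iso_rel m"
    then obtain \<phi> where "x \<in> rooted_maps_std m" and \<phi>: "\<phi> permutes {0..<2*m}" and "y = relabel \<phi> x"
      by (auto simp: rooted_map_iso_rel_iff[OF assms])
    then show "(y, x) \<in> rooted_map_iso_rel m"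
      using permutes_inv[OF \<phi>] relabel_in_rooted_maps_std[OF assms _ \<phi>]
      by (auto simp: rooted_map_iso_rel_iff[OF assms] relabel_inv[OF \<phi>])
  qed
  show "trans (rooted_map_iso_rel m)"
  proof (rule transI)
    fix x y z assume "(x, y) \<in> rooted_map_iso_rel m" "(y, z) \<in> rooted_map_iso_rel m"
    then obtain \<phi> \<psi> where "x \<in> rooted_maps_std m" and \<phi>: "\<phi> permutes {0..<2*m}"
      and \<psi>: "\<psi> permutes {0..<2*m}" and "z = relabel \<psi> (relabel \<phi> x)"
      by (auto simp: rooted_map_iso_rel_iff[OF assms])
    then show "(x, z) \<in> rooted_map_iso_rel m"
      using permutes_compose[OF \<phi> \<psi>]
      by (auto simp: rooted_map_iso_rel_iff[OF assms] relabel_relabel[OF \<phi> \<psi>])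
  qed
qed

lemma card_rooted_map_iso_class:
  assumes "0 < m" "C \<in> rooted_maps_std m // rooted_map_iso_rel m"
  shows "card C = fact (2 * m)"
proof -
  obtain M where M: "M \<in> rooted_maps_std m" and C: "C = rooted_map_iso_rel m `` {M}"
    using assms(2) by (rule quotientE)
  obtain \<sigma> \<alpha> r where M_eq: "M = (\<sigma>, \<alpha>, r)" by (cases M) auto
  have "C = (\<lambda>\<phi>. relabel \<phi> M) ` {\<phi>. \<phi> permutes {0..<2*m}}"
    using M by (auto simp: C rooted_map_iso_rel_iff[OF assms(1)])
  moreover have "inj_on (\<lambda>\<phi>. relabel \<phi> M) {\<phi>. \<phi> permutes {0..<2*m}}"
    using M assms(1) by (simp add: M_eq rooted_maps_std_iff inj_on_relabel)
  ultimately show ?thesis by (simp add: card_image card_permutations)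
qed

lemma varsigma_eq_if_iso:
  assumes "0 < m" "(M, M') \<in> rooted_map_iso_rel m"
  shows "varsigma m M = varsigma m M'"
  using assms by (cases M) (auto simp: rooted_map_iso_rel_iff varsigma_def relabel_def card_quasi_trees_conj)

lemma finite_rooted_maps_std:
  assumes "0 < m"
  shows "finite (rooted_maps_std m)"
proof (rule finite_subset)
  show "rooted_maps_std m \<subseteq> {\<sigma>. \<sigma> permutes {0..<2*m}} \<times> {\<alpha>. \<alpha> permutes {0..<2*m}} \<times> {0..<2*m}"
    using assms by (auto simp: rooted_maps_std_def is_rooted_map_def is_map_def)
qed (simp add: finite_permutations)

lemma finite_quasi_trees: "finite B \<Longrightarrow> finite (quasi_trees B \<sigma> \<alpha>)"
  by (rule finite_subset[of _ "Pow (map_edges B \<alpha>)"]) (auto simp: quasi_trees_def map_edges_def)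

lemma bij_betw_quasi_tree_pairs:
  assumes "0 < m"
  shows "bij_betw (\<lambda>((\<sigma>, \<alpha>, r), F). ((tour \<sigma> \<alpha> F, r), (\<alpha>, F)))
           (Sigma (rooted_maps_std m) (\<lambda>(\<sigma>, \<alpha>, r). quasi_trees {0..<2*m} \<sigma> \<alpha>))
           (rooted_cycles (2*m) \<times> (SIGMA \<alpha>:fpf_involutions {0..<2*m}. Pow (map_edges {0..<2*m} \<alpha>)))"
    (is "bij_betw ?encode ?A ?A'")
proof -
  let ?B = "{0..<2*m}" and ?decode = "\<lambda>((\<tau>, r), (\<alpha>, F)). ((\<tau> \<circ> edge_flip \<alpha> F, \<alpha>, r), F)"
  have A_iff: "((\<sigma>, \<alpha>, r), F) \<in> ?A \<longleftrightarrow>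
      is_map ?B \<sigma> \<alpha> \<and> r < 2 * m \<and> F \<subseteq> map_edges ?B \<alpha> \<and> single_cycle_on ?B (tour \<sigma> \<alpha> F)"
    for \<sigma> \<alpha> r F
    by (simp add: rooted_maps_std_iff[OF assms] quasi_trees_def)
  have A'_iff: "((\<tau>, r), (\<alpha>, F)) \<in> ?A' \<longleftrightarrow>
      \<tau> permutes ?B \<and> single_cycle_on ?B \<tau> \<and> r < 2 * m \<and> \<alpha> \<in> fpf_involutions ?B \<and> F \<subseteq> map_edges ?B \<alpha>"
    for \<tau> r \<alpha> F
    by (auto simp: rooted_cycles_def)
  show ?thesis
  proof (rule bij_betw_byWitness[where f' = ?decode])
    show "\<forall>x\<in>?A. ?decode (?encode x) = x"
    proof
      fix x assume "x \<in> ?A"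
      moreover obtain \<sigma> \<alpha> r F where x: "x = ((\<sigma>, \<alpha>, r), F)" by (metis prod.exhaust)
      ultimately have "\<alpha> \<in> fpf_involutions ?B" unfolding x A_iff is_map_iff by blast
      then show "?decode (?encode x) = x"
        by (simp add: x tour_edge_flip_inverse(1)[OF fpf_involution_involutive])
    qed
    show "\<forall>y\<in>?A'. ?encode (?decode y) = y"
    proof
      fix y assume "y \<in> ?A'"
      moreover obtain \<tau> r \<alpha> F where y: "y = ((\<tau>, r), (\<alpha>, F))" by (metis prod.exhaust)
      ultimately have "\<alpha> \<in> fpf_involutions ?B" unfolding y A'_iff by blast
      then show "?encode (?decode y) = y"
        by (simp add: y tour_edge_flip_inverse(2)[OF fpf_involution_involutive])
    qed
    show "?encode ` ?A \<subseteq> ?A'"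
    proof
      fix z assume "z \<in> ?encode ` ?A"
      then obtain x where "x \<in> ?A" and z: "z = ?encode x" by blast
      moreover obtain \<sigma> \<alpha> r F where "x = ((\<sigma>, \<alpha>, r), F)" by (metis prod.exhaust)
      ultimately have z: "z = ?encode ((\<sigma>, \<alpha>, r), F)" and x: "((\<sigma>, \<alpha>, r), F) \<in> ?A" by simp_all
      then have \<sigma>: "\<sigma> permutes ?B" and \<alpha>: "\<alpha> \<in> fpf_involutions ?B"
        unfolding A_iff is_map_iff by blast+
      have "tour \<sigma> \<alpha> F permutes ?B"
        unfolding tour_eq_comp_edge_flip by (rule permutes_compose[OF edge_flip_permutes[OF \<alpha>] \<sigma>])
      with x \<alpha> show "z \<in> ?A'" unfolding A_iff by (simp add: z rooted_cycles_def)
    qed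
    show "?decode ` ?A' \<subseteq> ?A"
    proof
      fix z assume "z \<in> ?decode ` ?A'"
      then obtain y where "y \<in> ?A'" and z: "z = ?decode y" by blast
      moreover obtain \<tau> r \<alpha> F where "y = ((\<tau>, r), (\<alpha>, F))" by (metis prod.exhaust)
      ultimately have z: "z = ?decode ((\<tau>, r), (\<alpha>, F))" and y: "((\<tau>, r), (\<alpha>, F)) \<in> ?A'" by simp_all
      then have \<tau>: "\<tau> permutes ?B" "single_cycle_on ?B \<tau>" "r < 2 * m"
        and \<alpha>: "\<alpha> \<in> fpf_involutions ?B" and F: "F \<subseteq> map_edges ?B \<alpha>"
        unfolding A'_iff by blast+
      have "tour (\<tau> \<circ> edge_flip \<alpha> F) \<alpha> F = \<tau>"
        by (rule tour_edge_flip_inverse(2)[OF fpf_involution_involutive[OF \<alpha>]])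
      moreover have "is_map ?B (\<tau> \<circ> edge_flip \<alpha> F) \<alpha>"
        by (rule is_map_comp_edge_flip[OF _ \<tau>(1,2) \<alpha>]) simp
      ultimately show "z \<in> ?A"
        using \<tau> F by (simp add: z rooted_maps_std_iff[OF assms] quasi_trees_def)
    qed
  qed
qed

lemma sum_varsigma_rooted_maps_std:
  assumes "0 < m"
  shows "(\<Sum>M\<in>rooted_maps_std m. varsigma m M) * fact m = fact (2 * m) * fact (2 * m)"
proof -
  let ?B = "{0..<2*m}"
  have "(\<Sum>M\<in>rooted_maps_std m. varsigma m M)
      = card (Sigma (rooted_maps_std m) (\<lambda>(\<sigma>, \<alpha>, r). quasi_trees ?B \<sigma> \<alpha>))"
    using finite_rooted_maps_std[OF assms]
    by (simp add: card_SigmaI finite_quasi_trees varsigma_def split_def)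
  also have "\<dots> = card (rooted_cycles (2*m) \<times> (SIGMA \<alpha>:fpf_involutions ?B. Pow (map_edges ?B \<alpha>)))"
    by (rule bij_betw_same_card[OF bij_betw_quasi_tree_pairs[OF assms]])
  also have "\<dots> = fact (2 * m) * card (SIGMA \<alpha>:fpf_involutions ?B. Pow (map_edges ?B \<alpha>))"
    using assms by (simp add: card_cartesian_product card_rooted_cycles)
  finally show ?thesis
    using card_fpf_involutions_with_edge_sets[of ?B m] by (simp flip: mult.assoc)
qed

text \<open>For \<open>m = 0\<close> the root is unconstrained, so \<open>rooted_maps_std 0\<close> is infinite; it is a single
  isomorphism class.\<close>

lemma iso_classes_rooted_maps_std_0:
  "rooted_maps_std 0 // rooted_map_iso_rel 0 = {rooted_maps_std 0}"
proof -
  have "rooted_map_iso_rel 0 = rooted_maps_std 0 \<times> rooted_maps_std 0"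
    by (auto simp: rooted_map_iso_rel_def rooted_map_iso_def)
  moreover have "(id, id, 0) \<in> rooted_maps_std 0"
    by (simp add: rooted_maps_std_def is_rooted_map_def is_map_def)
  ultimately show ?thesis by (auto simp: quotient_def)
qed

lemma varsigma_0: "varsigma 0 M = 1"
proof -
  have "quasi_trees {} \<sigma> \<alpha> = {{}}" for \<sigma> \<alpha> :: "nat \<Rightarrow> nat"
    by (auto simp: quasi_trees_def map_edges_def single_cycle_on_def)
  then show ?thesis by (simp add: varsigma_def split: prod.split)
qed

lemma sum_varsigma_iso_classes:
  "(\<Sum>C\<in>rooted_maps_std m // rooted_map_iso_rel m. varsigma m (SOME M. M \<in> C)) * fact m = fact (2 * m)"
proof (cases "m = 0")
  case True
  then show ?thesis by (simp add: iso_classes_rooted_maps_std_0 varsigma_0)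
next
  case False
  then have "fact (2 * m) * (\<Sum>C\<in>rooted_maps_std m // rooted_map_iso_rel m. varsigma m (SOME M. M \<in> C))
      = (\<Sum>M\<in>rooted_maps_std m. varsigma m M)"
    using sum_quotient_representatives[OF finite_rooted_maps_std equiv_rooted_map_iso_rel
        card_rooted_map_iso_class varsigma_eq_if_iso]
    by simp
  then have "fact (2 * m) * ((\<Sum>C\<in>rooted_maps_std m // rooted_map_iso_rel m. varsigma m (SOME M. M \<in> C)) * fact m)
      = fact (2 * m) * fact (2 * m)"
    using sum_varsigma_rooted_maps_std[of m] False by (simp flip: mult.assoc)
  then show ?thesis by simp
qed

theorem corollary2:
  fixes m :: nat
  shows "real (\<Sum>C \<in> rooted_maps_std m // rooted_map_iso_rel m. varsigma m (SOME M. M \<in> C))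
         = fact (2*m) / fact m"
  using sum_varsigma_iso_classes[of m, THEN arg_cong[where f = real]]
  by (simp add: field_simps)

end
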